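(* Let $(G,\mathcal{B}_1,\mathcal{B}_2)$ be a Rota-Baxter system of groups, with descendent operation $\circ$ and cocycle $\Phi$. Then $(G,\circ)$ is a group if and only if $\Phi:G\to G$ is bijective.
   Context: A Rota-Baxter system of groups is a triple $(G,\mathcal{B}_1,\mathcal{B}_2)$ where $G$ is a group and $\mathcal{B}_1,\mathcal{B}_2:G\to G$ are maps (not necessarily homomorphisms) such that for all $a,b\in G$: $\mathcal{B}_1(a)\mathcal{B}_1(b)=\mathcal{B}_1(\mathcal{B}_1(a)b\mathcal{B}_2(a))$ and $\mathcal{B}_2(b)\mathcal{B}_2(a)=\mathcal{B}_2(\mathcal{B}_1(a)b\mathcal{B}_2(a))$. The descendent operation is $a\circ b=\mathcal{B}_1(a)\,b\,\mathcal{B}_2(a)$, and the cocycle is $\Phi(a)=\mathcal{B}_1(a)\mathcal{B}_2(a)$. *)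

theory Defs
  imports "HOL-Algebra.Group"
begin

definition rota_baxter_system ::
  "('a, 'b) monoid_scheme \<Rightarrow> ('a \<Rightarrow> 'a) \<Rightarrow> ('a \<Rightarrow> 'a) \<Rightarrow> bool" where
  "rota_baxter_system G B1 B2 \<longleftrightarrow>
     group G \<and>
     B1 \<in> carrier G \<rightarrow> carrier G \<and> B2 \<in> carrier G \<rightarrow> carrier G \<and>
     (\<forall>a\<in>carrier G. \<forall>b\<in>carrier G.
        B1 a \<otimes>\<^bsub>G\<^esub> B1 b = B1 (B1 a \<otimes>\<^bsub>G\<^esub> b \<otimes>\<^bsub>G\<^esub> B2 a) \<and>
        B2 b \<otimes>\<^bsub>G\<^esub> B2 a = B2 (B1 a \<otimes>\<^bsub>G\<^esub> b \<otimes>\<^bsub>G\<^esub> B2 a))"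

definition descendent ::
  "('a, 'b) monoid_scheme \<Rightarrow> ('a \<Rightarrow> 'a) \<Rightarrow> ('a \<Rightarrow> 'a) \<Rightarrow> 'a \<Rightarrow> 'a \<Rightarrow> 'a" where
  "descendent G B1 B2 a b = B1 a \<otimes>\<^bsub>G\<^esub> b \<otimes>\<^bsub>G\<^esub> B2 a"

definition cocycle ::
  "('a, 'b) monoid_scheme \<Rightarrow> ('a \<Rightarrow> 'a) \<Rightarrow> ('a \<Rightarrow> 'a) \<Rightarrow> 'a \<Rightarrow> 'a" where
  "cocycle G B1 B2 a = B1 a \<otimes>\<^bsub>G\<^esub> B2 a"

definition descendent_monoid ::
  "('a, 'b) monoid_scheme \<Rightarrow> ('a \<Rightarrow> 'a) \<Rightarrow> ('a \<Rightarrow> 'a) \<Rightarrow> 'a \<Rightarrow> 'a monoid" where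
  "descendent_monoid G B1 B2 e =
     \<lparr>carrier = carrier G, mult = descendent G B1 B2, one = e\<rparr>"

end

theory Submission
  imports Defs
begin

text \<open>
  The cocycle is right translation by the identity of G for the descendent operation:
  \<open>\<Phi>(a) = a \<circ> 1\<close>. The operation \<open>\<circ>\<close> is always associative with bijective left
  translations \<open>x \<mapsto> B1(a) x B2(a)\<close>. In a group all right translations are bijective,
  and conversely a semigroup with bijective left translations and one injective right
  translation is already a group: solving \<open>u \<circ> x = u\<close> and cancelling gives an idempotent,
  hence a left identity \<open>e\<close>, and \<open>(y \<circ> e) \<circ> u = y \<circ> u\<close> makes it a right identity.
\<close>

lemma (in group) bij_betw_multc:
  assumes "c \<in> carrier G"
  shows "bij_betw (\<lambda>x. x \<otimes> c) (carrier G) (carrier G)"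
proof (rule bij_betw_imageI)
  show "inj_on (\<lambda>x. x \<otimes> c) (carrier G)" using inj_on_multc[OF assms] .
  show "(\<lambda>x. x \<otimes> c) ` carrier G = carrier G"
  proof
    show "carrier G \<subseteq> (\<lambda>x. x \<otimes> c) ` carrier G"
    proof
      fix y assume "y \<in> carrier G"
      then have "y = (y \<otimes> inv c) \<otimes> c" and "y \<otimes> inv c \<in> carrier G"
        using assms by (simp_all add: m_assoc)
      then show "y \<in> (\<lambda>x. x \<otimes> c) ` carrier G" by blast
    qed
  qed (use assms in auto)
qed

lemma group_of_left_solvable_semigroup:
  assumes closed: "\<And>x y. x \<in> S \<Longrightarrow> y \<in> S \<Longrightarrow> f x y \<in> S"
    and assoc: "\<And>x y z. x \<in> S \<Longrightarrow> y \<in> S \<Longrightarrow> z \<in> S \<Longrightarrow> f (f x y) z = f x (f y z)"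
    and solvable: "\<And>a b. a \<in> S \<Longrightarrow> b \<in> S \<Longrightarrow> \<exists>x\<in>S. f a x = b"
    and cancel: "\<And>a x y. a \<in> S \<Longrightarrow> x \<in> S \<Longrightarrow> y \<in> S \<Longrightarrow> f a x = f a y \<Longrightarrow> x = y"
    and "u \<in> S" and inj: "inj_on (\<lambda>x. f x u) S"
  shows "\<exists>e. group \<lparr>carrier = S, mult = f, one = e\<rparr>"
proof -
  obtain e where "e \<in> S" and "f u e = u"
    using solvable[OF \<open>u \<in> S\<close> \<open>u \<in> S\<close>] by blast
  have "f u (f e e) = f (f u e) e"
    using assoc[OF \<open>u \<in> S\<close> \<open>e \<in> S\<close> \<open>e \<in> S\<close>] by simp
  also have "\<dots> = f u e"
    using \<open>f u e = u\<close> by simp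
  finally have idem: "f e e = e"
    using cancel[OF \<open>u \<in> S\<close> closed[OF \<open>e \<in> S\<close> \<open>e \<in> S\<close>] \<open>e \<in> S\<close>] by simp
  have left_one: "f e y = y" if "y \<in> S" for y
  proof (rule cancel[OF \<open>e \<in> S\<close> closed[OF \<open>e \<in> S\<close> that] that])
    show "f e (f e y) = f e y"
      using assoc[OF \<open>e \<in> S\<close> \<open>e \<in> S\<close> that] idem by simp
  qed
  have right_one: "f y e = y" if "y \<in> S" for y
  proof (rule inj_onD[OF inj _ closed[OF that \<open>e \<in> S\<close>] that])
    show "f (f y e) u = f y u"
      using assoc[OF that \<open>e \<in> S\<close> \<open>u \<in> S\<close>] left_one[OF \<open>u \<in> S\<close>] by simp
  qed
  have left_inv: "\<exists>y\<in>S. f y x = e" if x: "x \<in> S" for x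
  proof -
    obtain y where "y \<in> S" "f x y = e" using solvable[OF x \<open>e \<in> S\<close>] by blast
    obtain z where "z \<in> S" "f y z = e" using solvable[OF \<open>y \<in> S\<close> \<open>e \<in> S\<close>] by blast
    have "x = f x (f y z)" using \<open>f y z = e\<close> right_one[OF x] by simp
    also have "\<dots> = f (f x y) z" using assoc[OF x \<open>y \<in> S\<close> \<open>z \<in> S\<close>] by simp
    also have "\<dots> = z" using \<open>f x y = e\<close> left_one[OF \<open>z \<in> S\<close>] by simp
    finally show ?thesis using \<open>y \<in> S\<close> \<open>f y z = e\<close> by blast
  qed
  have "group \<lparr>carrier = S, mult = f, one = e\<rparr>"
    by (rule groupI) (simp_all add: closed assoc \<open>e \<in> S\<close> left_one left_inv)
  then show ?thesis by blast
qed

context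
  fixes G :: "('a, 'b) monoid_scheme" and B1 B2 :: "'a \<Rightarrow> 'a"
  assumes rbs: "rota_baxter_system G B1 B2"
begin

interpretation group G
  using rbs by (simp add: rota_baxter_system_def)

lemma rota_baxter_closed:
  "a \<in> carrier G \<Longrightarrow> B1 a \<in> carrier G" "a \<in> carrier G \<Longrightarrow> B2 a \<in> carrier G"
  using rbs by (auto simp: rota_baxter_system_def)

lemma rota_baxter_descendent:
  assumes "a \<in> carrier G" "b \<in> carrier G"
  shows "B1 (descendent G B1 B2 a b) = B1 a \<otimes>\<^bsub>G\<^esub> B1 b"
    and "B2 (descendent G B1 B2 a b) = B2 b \<otimes>\<^bsub>G\<^esub> B2 a"
  using rbs assms by (simp_all add: rota_baxter_system_def descendent_def)

lemma descendent_closed: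
  "a \<in> carrier G \<Longrightarrow> b \<in> carrier G \<Longrightarrow> descendent G B1 B2 a b \<in> carrier G"
  by (simp add: descendent_def rota_baxter_closed)

lemma descendent_assoc:
  assumes "a \<in> carrier G" "b \<in> carrier G" "c \<in> carrier G"
  shows "descendent G B1 B2 (descendent G B1 B2 a b) c
       = descendent G B1 B2 a (descendent G B1 B2 b c)"
proof -
  have "descendent G B1 B2 (descendent G B1 B2 a b) c
      = (B1 a \<otimes>\<^bsub>G\<^esub> B1 b) \<otimes>\<^bsub>G\<^esub> c \<otimes>\<^bsub>G\<^esub> (B2 b \<otimes>\<^bsub>G\<^esub> B2 a)"
    using assms by (simp only: descendent_def[of G B1 B2 "descendent G B1 B2 a b"]
        rota_baxter_descendent)
  then show ?thesis
    using assms by (simp add: descendent_def rota_baxter_closed m_assoc)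
qed

lemma descendent_left_solvable:
  assumes "a \<in> carrier G" "b \<in> carrier G"
  shows "\<exists>x\<in>carrier G. descendent G B1 B2 a x = b"
proof
  note B = rota_baxter_closed[OF assms(1)]
  let ?x = "inv\<^bsub>G\<^esub> (B1 a) \<otimes>\<^bsub>G\<^esub> (b \<otimes>\<^bsub>G\<^esub> inv\<^bsub>G\<^esub> (B2 a))"
  show "?x \<in> carrier G" using assms B by simp
  have "descendent G B1 B2 a ?x
      = (B1 a \<otimes>\<^bsub>G\<^esub> inv\<^bsub>G\<^esub> (B1 a)) \<otimes>\<^bsub>G\<^esub> (b \<otimes>\<^bsub>G\<^esub> inv\<^bsub>G\<^esub> (B2 a)) \<otimes>\<^bsub>G\<^esub> B2 a"
    using assms B by (simp add: descendent_def m_assoc[symmetric])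
  also have "\<dots> = b \<otimes>\<^bsub>G\<^esub> (inv\<^bsub>G\<^esub> (B2 a) \<otimes>\<^bsub>G\<^esub> B2 a)"
    using assms B by (simp add: m_assoc)
  finally show "descendent G B1 B2 a ?x = b"
    using assms B by simp
qed

lemma descendent_left_cancel:
  assumes "a \<in> carrier G" "x \<in> carrier G" "y \<in> carrier G"
    and "descendent G B1 B2 a x = descendent G B1 B2 a y"
  shows "x = y"
  using assms rota_baxter_closed[OF assms(1)]
  by (simp add: descendent_def m_assoc)

lemma cocycle_eq_descendent_one:
  "a \<in> carrier G \<Longrightarrow> cocycle G B1 B2 a = descendent G B1 B2 a \<one>\<^bsub>G\<^esub>"
  by (simp add: cocycle_def descendent_def rota_baxter_closed)

end

theorem theorem3p12:
  fixes G :: "('a, 'b) monoid_scheme" and B1 B2 :: "'a \<Rightarrow> 'a"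
  assumes "rota_baxter_system G B1 B2"
  shows "(\<exists>e. group (descendent_monoid G B1 B2 e)) \<longleftrightarrow>
         bij_betw (cocycle G B1 B2) (carrier G) (carrier G)"
proof -
  interpret group G using assms by (simp add: rota_baxter_system_def)
  have cocycle_eq: "\<And>a. a \<in> carrier G \<Longrightarrow> cocycle G B1 B2 a = descendent G B1 B2 a \<one>\<^bsub>G\<^esub>"
    using cocycle_eq_descendent_one[OF assms] .
  show ?thesis
  proof
    assume "\<exists>e. group (descendent_monoid G B1 B2 e)"
    then obtain e where "group (descendent_monoid G B1 B2 e)" by blast
    then have "bij_betw (\<lambda>x. descendent G B1 B2 x \<one>\<^bsub>G\<^esub>) (carrier G) (carrier G)"
      using group.bij_betw_multc[of "descendent_monoid G B1 B2 e" "\<one>\<^bsub>G\<^esub>"]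
      by (simp add: descendent_monoid_def)
    then show "bij_betw (cocycle G B1 B2) (carrier G) (carrier G)"
      using bij_betw_cong[of "carrier G" "cocycle G B1 B2" "\<lambda>x. descendent G B1 B2 x \<one>\<^bsub>G\<^esub>"]
        cocycle_eq by simp
  next
    assume "bij_betw (cocycle G B1 B2) (carrier G) (carrier G)"
    then have inj_one: "inj_on (\<lambda>x. descendent G B1 B2 x \<one>\<^bsub>G\<^esub>) (carrier G)"
      using inj_on_cong[of "carrier G" "cocycle G B1 B2" "\<lambda>x. descendent G B1 B2 x \<one>\<^bsub>G\<^esub>"]
        cocycle_eq by (simp add: bij_betw_def)
    show "\<exists>e. group (descendent_monoid G B1 B2 e)"
      unfolding descendent_monoid_def
      by (rule group_of_left_solvable_semigroup[where u = "\<one>\<^bsub>G\<^esub>"])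
        (assumption | rule inj_one one_closed descendent_closed[OF assms]
          descendent_assoc[OF assms] descendent_left_solvable[OF assms]
          descendent_left_cancel[OF assms])+
  qed
qed

end
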